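(* Let $(X,V,v)$ be a measure space over a prering $V$ with $X\in V$, let $S=S(V)$ and let $N$ be the family of null sets. For $A\subset X$ the following are equivalent: (a) $A\in V_c$; (b) $A=B\triangle D$ for some $B\in S^{\delta\sigma}$ and $D\in N$; (c) $A=B\triangle D$ for some $B\in V^{\sigma\delta}$ and $D\in N$. Here $\triangle$ is symmetric difference, $W^\sigma$ (resp. $W^\delta$) denotes countable unions (resp. countable intersections) of members of $W$, $S^{\delta\sigma}=(S^\delta)^\sigma$ and $V^{\sigma\delta}=(V^\sigma)^\delta$.
   Context: Measure space: $X$ a set, $V$ a prering (i.e. $\emptyset\in V$ and for $A,B\in V$ the sets $A\cap B$, $A\setminus B$ belong to $S(V)$, the family of finite disjoint unions of members of $V$), $v:V\to[0,\infty)$ countably additive. $S(V,\mathbb R)$: simple functions $\sum r_ic_{A_i}$ with $A_i\in V$ pairwise disjoint; $\int h\,dv=\sum r_iv(A_i)$, $\|h\|=\int|h|dv$. Null set: for every $\varepsilon>0$ covered by countably many $A_t\in V$ with $\sum v(A_t)<\varepsilon$. Basic sequence: $s_n=h_1+\dots+h_n$ with simple $h_n$, $\|h_n\|\le M4^{-n}$. $L(v,\mathbb R)$: almost-everywhere limits of basic sequences. $V_c=\{A\subset X: c_A\in L(v,\mathbb R)\}$. *)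

theory Defs
  imports Complex_Main "HOL-Library.Disjoint_Sets" "HOL-Library.Indicator_Function"
begin

definition S_of :: "'a set set \<Rightarrow> 'a set set" where
  "S_of V = {\<Union>F | F. finite F \<and> F \<subseteq> V \<and> disjoint F}"

definition prering :: "'a set set \<Rightarrow> bool" where
  "prering V \<longleftrightarrow> {} \<in> V \<and> (\<forall>A\<in>V. \<forall>B\<in>V. A \<inter> B \<in> S_of V \<and> A - B \<in> S_of V)"

definition countably_additive_on :: "'a set set \<Rightarrow> ('a set \<Rightarrow> real) \<Rightarrow> bool" where
  "countably_additive_on V v \<longleftrightarrow>
     (\<forall>A\<in>V. 0 \<le> v A) \<and>
     (\<forall>A (F :: nat \<Rightarrow> 'a set). A \<in> V \<longrightarrow> range F \<subseteq> V \<longrightarrow> disjoint_family F \<longrightarrow>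
         A = (\<Union>n. F n) \<longrightarrow> (\<lambda>n. v (F n)) sums v A)"

definition measure_space_pr :: "'a set \<Rightarrow> 'a set set \<Rightarrow> ('a set \<Rightarrow> real) \<Rightarrow> bool" where
  "measure_space_pr X V v \<longleftrightarrow> V \<subseteq> Pow X \<and> prering V \<and> countably_additive_on V v"

definition simple_rep :: "'a set set \<Rightarrow> ('a \<Rightarrow> real) \<Rightarrow> nat \<Rightarrow> (nat \<Rightarrow> real) \<Rightarrow> (nat \<Rightarrow> 'a set) \<Rightarrow> bool" where
  "simple_rep V h n r A \<longleftrightarrow> (\<forall>i<n. A i \<in> V) \<and> disjoint_family_on A {..<n} \<and>
     h = (\<lambda>x. \<Sum>i<n. r i * indicator (A i) x)"

definition simple_fun :: "'a set set \<Rightarrow> ('a \<Rightarrow> real) \<Rightarrow> bool" where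
  "simple_fun V h \<longleftrightarrow> (\<exists>n r A. simple_rep V h n r A)"

text \<open>Integral of a simple function (independent of the representation).\<close>
definition simple_int :: "'a set set \<Rightarrow> ('a set \<Rightarrow> real) \<Rightarrow> ('a \<Rightarrow> real) \<Rightarrow> real" where
  "simple_int V v h = (SOME s. \<exists>n r A. simple_rep V h n r A \<and> s = (\<Sum>i<n. r i * v (A i)))"

definition simple_norm :: "'a set set \<Rightarrow> ('a set \<Rightarrow> real) \<Rightarrow> ('a \<Rightarrow> real) \<Rightarrow> real" where
  "simple_norm V v h = simple_int V v (\<lambda>x. \<bar>h x\<bar>)"

definition null_set :: "'a set set \<Rightarrow> ('a set \<Rightarrow> real) \<Rightarrow> 'a set \<Rightarrow> bool" where
  "null_set V v D \<longleftrightarrow> (\<forall>\<epsilon>>0. \<exists>At :: nat \<Rightarrow> 'a set. range At \<subseteq> V \<and> D \<subseteq> (\<Union>t. At t) \<and>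
      summable (\<lambda>t. v (At t)) \<and> (\<Sum>t. v (At t)) < \<epsilon>)"

definition basic_seq :: "'a set set \<Rightarrow> ('a set \<Rightarrow> real) \<Rightarrow> (nat \<Rightarrow> 'a \<Rightarrow> real) \<Rightarrow> bool" where
  "basic_seq V v s \<longleftrightarrow> (\<exists>(h :: nat \<Rightarrow> 'a \<Rightarrow> real) M.
      (\<forall>n\<ge>1. simple_fun V (h n) \<and> simple_norm V v (h n) \<le> M / 4 ^ n) \<and>
      (\<forall>n. s n = (\<lambda>x. \<Sum>k\<in>{1..n}. h k x)))"

definition L_space :: "'a set \<Rightarrow> 'a set set \<Rightarrow> ('a set \<Rightarrow> real) \<Rightarrow> ('a \<Rightarrow> real) set" where
  "L_space X V v = {f. \<exists>s. basic_seq V v s \<and>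
      null_set V v {x\<in>X. \<not> ((\<lambda>n. s n x) \<longlonglongrightarrow> f x)}}"

definition V_c :: "'a set \<Rightarrow> 'a set set \<Rightarrow> ('a set \<Rightarrow> real) \<Rightarrow> 'a set set" where
  "V_c X V v = {A. A \<subseteq> X \<and> indicator A \<in> L_space X V v}"

definition sigma_of :: "'a set set \<Rightarrow> 'a set set" where
  "sigma_of W = {\<Union>(range F) | F :: nat \<Rightarrow> 'a set. range F \<subseteq> W}"

definition delta_of :: "'a set set \<Rightarrow> 'a set set" where
  "delta_of W = {\<Inter>(range F) | F :: nat \<Rightarrow> 'a set. range F \<subseteq> W}"

definition symdiff :: "'a set \<Rightarrow> 'a set \<Rightarrow> 'a set" where
  "symdiff B D = (B - D) \<union> (D - B)"

end

theory Submission
  imports Defs "HOL-Analysis.Analysis"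
begin

(* S(V) is a ring of sets R; v extends to a countably additive volume on R and, via
   Caratheodory's outer measure, to a finite measure M on the \<sigma>-algebra generated by V.  The
   paper's null sets are exactly the subsets of M-null sets, and every measurable set is
   (i) approximated in measure by members of R and (ii) contained in a V^{\<sigma>\<delta>}-set of the
   same measure.  Then
   - (a) \<Longrightarrow> (b): the partial sums s_n of a basic sequence take finitely many values, each on a
     member of R, so A agrees off a null set with liminf_n {s_n > 1/2} \<in> S^{\<delta>\<sigma>};
   - (b) \<Longrightarrow> (c): by (ii), since S^{\<delta>\<sigma>}-sets are M-measurable;
   - (b), (c) \<Longrightarrow> (a): approximating B by P_n \<in> R with measure (P_n \<triangle> B) < 4^{-n} by (i), the
     indicators of P_n form a basic sequence converging to 1_B a.e. (Borel-Cantelli). *)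

section \<open>Finite disjoint unions of members of a prering\<close>

lemma S_ofI: "finite C \<Longrightarrow> C \<subseteq> V \<Longrightarrow> disjoint C \<Longrightarrow> \<Union>C \<in> S_of V"
  unfolding S_of_def by blast

lemma S_ofE:
  assumes "E \<in> S_of V"
  obtains C where "finite C" "C \<subseteq> V" "disjoint C" "E = \<Union>C"
  using assms unfolding S_of_def by blast

lemma S_of_empty: "{} \<in> S_of V"
  using S_ofI[of "{}" V] by simp

lemma S_of_base: "A \<in> V \<Longrightarrow> A \<in> S_of V"
  using S_ofI[of "{A}" V] by (simp add: disjoint_def)

lemma S_of_Un_disjoint:
  assumes "E1 \<in> S_of V" "E2 \<in> S_of V" "E1 \<inter> E2 = {}"
  shows "E1 \<union> E2 \<in> S_of V"
proof -
  obtain C1 where C1: "finite C1" "C1 \<subseteq> V" "disjoint C1" "E1 = \<Union>C1" using assms(1) by (rule S_ofE)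
  obtain C2 where C2: "finite C2" "C2 \<subseteq> V" "disjoint C2" "E2 = \<Union>C2" using assms(2) by (rule S_ofE)
  have "disjoint (C1 \<union> C2)" using C1 C2 assms(3) by (intro disjoint_union) auto
  then have "\<Union>(C1 \<union> C2) \<in> S_of V" using C1 C2 by (intro S_ofI) auto
  then show ?thesis using C1 C2 by simp
qed

lemma S_of_UN_disjoint:
  assumes "finite I" "\<And>i. i \<in> I \<Longrightarrow> F i \<in> S_of V" "disjoint_family_on F I"
  shows "(\<Union>i\<in>I. F i) \<in> S_of V"
  using assms
proof (induction I rule: finite_induct)
  case empty
  then show ?case by (simp add: S_of_empty)
next
  case (insert i I)
  have "F i \<inter> (\<Union>j\<in>I. F j) = {}"
    using insert.prems(2) insert.hyps(2) unfolding disjoint_family_on_def by fastforce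
  moreover have "(\<Union>j\<in>I. F j) \<in> S_of V"
    using insert by (auto intro: disjoint_family_on_mono[of I "insert i I"])
  ultimately show ?case using insert.prems by (auto intro!: S_of_Un_disjoint)
qed

context
  fixes V :: "'a set set"
  assumes pr: "prering V"
begin

lemma S_of_Diff_base:
  assumes "E \<in> S_of V" "c \<in> V"
  shows "E - c \<in> S_of V"
proof -
  obtain C where C: "finite C" "C \<subseteq> V" "disjoint C" "E = \<Union>C" using assms(1) by (rule S_ofE)
  have "E - c = (\<Union>a\<in>C. a - c)" using C by auto
  also have "\<dots> \<in> S_of V"
    using C pr assms(2) unfolding prering_def
    by (intro S_of_UN_disjoint) (auto simp: disjoint_family_on_def disjoint_def)
  finally show ?thesis .
qed

lemma S_of_Diff:
  assumes "E1 \<in> S_of V" "E2 \<in> S_of V"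
  shows "E1 - E2 \<in> S_of V"
proof -
  obtain C where C: "finite C" "C \<subseteq> V" "E2 = \<Union>C" using assms(2) by (rule S_ofE)
  have "E1 - \<Union>C \<in> S_of V" using C(1,2)
  proof (induction C rule: finite_induct)
    case (insert c C)
    have "E1 - \<Union>(insert c C) = (E1 - \<Union>C) - c" by auto
    then show ?case using insert by (simp add: S_of_Diff_base)
  qed (simp add: assms(1))
  then show ?thesis using C(3) by simp
qed

lemma S_of_Un:
  assumes "E1 \<in> S_of V" "E2 \<in> S_of V"
  shows "E1 \<union> E2 \<in> S_of V"
proof -
  have "E1 \<union> E2 = (E1 - E2) \<union> E2" by auto
  moreover have "(E1 - E2) \<inter> E2 = {}" by auto
  ultimately show ?thesis using S_of_Un_disjoint[OF S_of_Diff[OF assms] assms(2)] by simp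
qed

lemma ring_of_sets_S_of:
  assumes "V \<subseteq> Pow X"
  shows "ring_of_sets X (S_of V)"
  unfolding ring_of_sets_iff
proof (intro conjI ballI)
  show "S_of V \<subseteq> Pow X" using assms by (auto simp: S_of_def)
qed (auto simp: S_of_empty S_of_Un S_of_Diff)

end

text \<open>A finite disjoint family, listed without repetition and padded with empty sets, is a
  disjoint sequence with the same union; this turns finite sums into series and back.\<close>

definition pad :: "'a set list \<Rightarrow> nat \<Rightarrow> 'a set" where
  "pad xs i = (if i < length xs then xs ! i else {})"

lemma pad_range: "range (pad xs) \<subseteq> insert {} (set xs)"
  by (auto simp: pad_def)

lemma UN_pad: "(\<Union>i. pad xs i) = \<Union>(set xs)"
proof
  show "(\<Union>i. pad xs i) \<subseteq> \<Union>(set xs)" using pad_range[of xs] by blast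
  show "\<Union>(set xs) \<subseteq> (\<Union>i. pad xs i)"
  proof
    fix x assume "x \<in> \<Union>(set xs)"
    then obtain i where "i < length xs" "x \<in> xs ! i" by (auto simp: in_set_conv_nth)
    then show "x \<in> (\<Union>i. pad xs i)" by (auto simp: pad_def)
  qed
qed

lemma disjoint_family_pad:
  assumes "distinct xs" "disjoint (set xs)"
  shows "disjoint_family (pad xs)"
  unfolding disjoint_family_on_def
proof (intro ballI impI)
  fix i j :: nat assume "i \<noteq> j"
  show "pad xs i \<inter> pad xs j = {}"
  proof (cases "i < length xs \<and> j < length xs")
    case True
    then have "xs ! i \<noteq> xs ! j" using \<open>i \<noteq> j\<close> assms(1) by (simp add: nth_eq_iff_index_eq)
    moreover have "xs ! i \<in> set xs" "xs ! j \<in> set xs" using True by simp_all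
    ultimately show ?thesis using True disjointD[OF assms(2)] by (simp add: pad_def)
  qed (auto simp: pad_def)
qed

lemma suminf_pad:
  fixes f :: "'a set \<Rightarrow> ennreal"
  assumes "f {} = 0" "distinct xs"
  shows "(\<Sum>i. f (pad xs i)) = (\<Sum>c\<in>set xs. f c)"
proof -
  have "(\<Sum>i. f (pad xs i)) = (\<Sum>i<length xs. f (xs ! i))"
    using assms(1) by (subst suminf_finite[of "{..<length xs}"]) (auto simp: pad_def)
  also have "\<dots> = (\<Sum>c\<in>set xs. f c)"
    by (rule sum.reindex_bij_betw[OF bij_betw_nth[OF assms(2) refl refl]])
  finally show ?thesis .
qed

lemma countably_additive_imp_volume:
  assumes "{} \<in> M" "positive M f" "countably_additive M f"
  shows "volume M f"
proof (rule volumeI)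
  show f0: "f {} = 0" using assms(2) by (simp add: positive_def)
  fix C assume C: "C \<subseteq> M" "disjoint C" "finite C" "\<Union>C \<in> M"
  obtain xs where xs: "set xs = C" "distinct xs" using finite_distinct_list[OF C(3)] by blast
  have "insert {} (set xs) \<subseteq> M" using xs(1) C(1) assms(1) by simp
  then have range: "range (pad xs) \<subseteq> M" using pad_range[of xs] by (rule subset_trans[rotated])
  have disj: "disjoint_family (pad xs)" using disjoint_family_pad[of xs] xs C(2) by simp
  have U: "(\<Union>i. pad xs i) = \<Union>C" using UN_pad[of xs] xs(1) by simp
  have "f (\<Union>C) = (\<Sum>i. f (pad xs i))"
    using assms(3) range disj C(4) unfolding countably_additive_def U[symmetric] by metis
  also have "\<dots> = (\<Sum>c\<in>C. f c)" using suminf_pad[of f xs] xs f0 by simp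
  finally show "f (\<Union>C) = (\<Sum>c\<in>C. f c)" .
qed simp

lemma disjoint_family_on_Sigma_snd:
  assumes "disjoint C" "\<And>c. c \<in> C \<Longrightarrow> disjoint (P c)" "\<And>c e. c \<in> C \<Longrightarrow> e \<in> P c \<Longrightarrow> e \<subseteq> c"
  shows "disjoint_family_on snd (Sigma C P)"
  unfolding disjoint_family_on_def
proof (intro ballI impI)
  fix p q assume pq: "p \<in> Sigma C P" "q \<in> Sigma C P" "p \<noteq> q"
  obtain c e c' e' where pe: "p = (c, e)" and qe: "q = (c', e')" by fastforce
  have h: "c \<in> C" "e \<in> P c" "c' \<in> C" "e' \<in> P c'" using pq pe qe by auto
  show "snd p \<inter> snd q = {}"
  proof (cases "c = c'")
    case True
    then have "e \<noteq> e'" using pq pe qe by auto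
    then show ?thesis using assms(2)[OF h(1)] h True pe qe by (auto simp: disjoint_def)
  next
    case False
    then have "c \<inter> c' = {}" using assms(1) h by (auto simp: disjoint_def)
    then show ?thesis using assms(3)[OF h(1,2)] assms(3)[OF h(3,4)] pe qe by auto
  qed
qed

lemma disjoint_family_flatten:
  assumes "disjoint_family A" "\<And>i. disjoint_family (F i)" "\<And>i j. F i j \<subseteq> A i"
  shows "disjoint_family (\<lambda>k. case_prod F (prod_decode k))"
  unfolding disjoint_family_on_def
proof (intro ballI impI)
  fix m n :: nat assume "m \<noteq> n"
  obtain i j where m: "prod_decode m = (i, j)" by fastforce
  obtain i' j' where n: "prod_decode n = (i', j')" by fastforce
  have "(i, j) \<noteq> (i', j')"
    using \<open>m \<noteq> n\<close> m n inj_prod_decode[of UNIV] by (metis inj_def)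
  then have "F i j \<inter> F i' j' = {}"
  proof (cases "i = i'")
    case True
    then show ?thesis using assms(2) \<open>(i, j) \<noteq> (i', j')\<close> by (auto simp: disjoint_family_on_def)
  next
    case False
    then have "A i \<inter> A i' = {}" using assms(1) by (auto simp: disjoint_family_on_def)
    then show ?thesis using assms(3)[of i j] assms(3)[of i' j'] by blast
  qed
  then show "case_prod F (prod_decode m) \<inter> case_prod F (prod_decode n) = {}"
    using m n by simp
qed

lemma nonpos_if_le_inverse_Suc:
  fixes x :: real
  assumes "\<And>k::nat. x \<le> 1 / Suc k"
  shows "x \<le> 0"
proof (rule ccontr)
  assume "\<not> x \<le> 0"
  then obtain k where "inverse (real (Suc k)) < x" using reals_Archimedean[of x] by auto
  then show False using assms[of k] by (simp add: inverse_eq_divide)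
qed

lemma sum_lessThan_add:
  fixes g :: "nat \<Rightarrow> 'b::comm_monoid_add"
  shows "(\<Sum>i<m + n. g i) = (\<Sum>i<m. g i) + (\<Sum>i<n. g (m + i))"
  by (induct n) (simp_all add: ac_simps)

text \<open>Where a real sequence converges to \<open>1\<^sub>A\<close>, membership in \<open>A\<close> is decided by eventually
  exceeding \<open>1/2\<close>: the exceptional set of \<open>A \<triangle> lim inf\<^sub>n {s\<^sub>n > 1/2}\<close> is contained in the set of
  non-convergence.\<close>

lemma symdiff_liminf_superlevel_subset:
  fixes s :: "nat \<Rightarrow> 'a \<Rightarrow> real"
  assumes A_sub: "A \<subseteq> X"
  shows "symdiff A (\<Union>m. \<Inter>n. {x\<in>X. 1/2 < s (n + m) x}) \<subseteq> {x\<in>X. \<not> (\<lambda>n. s n x) \<longlonglongrightarrow> indicator A x}"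
    (is "symdiff A ?B \<subseteq> _")
proof (rule subsetI, rule CollectI, rule conjI)
  fix x assume x: "x \<in> symdiff A ?B"
  then show "x \<in> X" using A_sub by (auto simp: symdiff_def)
  show "\<not> (\<lambda>n. s n x) \<longlonglongrightarrow> indicator A x"
  proof
    assume lim: "(\<lambda>n. s n x) \<longlonglongrightarrow> indicator A x"
    show False
    proof (cases "x \<in> A")
      case True
      then have "eventually (\<lambda>n. 1/2 < s n x) sequentially"
        using lim by (intro order_tendstoD) auto
      then obtain m where "\<forall>n\<ge>m. 1/2 < s n x" by (auto simp: eventually_sequentially)
      then have "x \<in> ?B" using \<open>x \<in> X\<close> by (intro UN_I[of m]) auto
      then show False using x True by (auto simp: symdiff_def)
    next
      case False
      then have "eventually (\<lambda>n. s n x < 1/2) sequentially"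
        using lim by (intro order_tendstoD) auto
      then obtain m where m: "\<forall>n\<ge>m. s n x < 1/2" by (auto simp: eventually_sequentially)
      have "x \<in> ?B" using x False by (auto simp: symdiff_def)
      then obtain k where "1/2 < s (m + k) x" by auto
      then show False using m[rule_format, of "m + k"] by simp
    qed
  qed
qed

lemma sigma_of_subset_sets: "W \<subseteq> sets N \<Longrightarrow> sigma_of W \<subseteq> sets N"
  unfolding sigma_of_def by (auto intro!: sets.countable_UN)

lemma delta_of_subset_sets: "W \<subseteq> sets N \<Longrightarrow> delta_of W \<subseteq> sets N"
  unfolding delta_of_def by (auto intro!: sets.countable_INT)

section \<open>Extending \<open>v\<close> to a measure\<close>

locale prering_measure =
  fixes X :: "'a set" and V :: "'a set set" and v :: "'a set \<Rightarrow> real"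
  assumes measure_space: "measure_space_pr X V v"
begin

lemma V_Pow: "V \<subseteq> Pow X"
  using measure_space by (simp add: measure_space_pr_def)

lemma prering: "prering V"
  using measure_space by (simp add: measure_space_pr_def)

lemma empty_in_V: "{} \<in> V"
  using prering by (simp add: prering_def)

lemma v_nonneg: "A \<in> V \<Longrightarrow> 0 \<le> v A"
  using measure_space by (simp add: measure_space_pr_def countably_additive_on_def)

lemma v_sums:
  "A \<in> V \<Longrightarrow> range F \<subseteq> V \<Longrightarrow> disjoint_family F \<Longrightarrow> A = (\<Union>n. F n) \<Longrightarrow> (\<lambda>n. v (F n)) sums v A"
  using measure_space by (simp add: measure_space_pr_def countably_additive_on_def)

text \<open>Countable additivity applied to the constant sequence \<open>{}\<close> forces \<open>v {} = 0\<close>.\<close>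

lemma v_empty: "v {} = 0"
proof -
  have "(\<lambda>n. v {}) sums v {}"
    using v_sums[of "{}" "\<lambda>_. {}"] empty_in_V by (auto simp: disjoint_family_on_def)
  then have "(\<lambda>n. v {}) \<longlonglongrightarrow> 0" by (intro summable_LIMSEQ_zero sums_summable)
  then show ?thesis using LIMSEQ_const_iff by blast
qed

abbreviation R :: "'a set set" where "R \<equiv> S_of V"

lemma ring: "ring_of_sets X R"
  using ring_of_sets_S_of[OF prering V_Pow] .

sublocale R_ring: ring_of_sets X R by (rule ring)

lemma V_in_R: "A \<in> V \<Longrightarrow> A \<in> R"
  by (rule S_of_base)

definition vol :: "'a set \<Rightarrow> ennreal" where
  "vol A = ennreal (v A)"

lemma vol_empty: "vol {} = 0"
  by (simp add: vol_def v_empty)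

lemma positive_vol: "positive V vol"
  by (simp add: positive_def vol_empty)

lemma countably_additive_vol: "countably_additive V vol"
proof (rule countably_additiveI)
  fix A :: "nat \<Rightarrow> 'a set" assume A: "range A \<subseteq> V" "disjoint_family A" "(\<Union>i. A i) \<in> V"
  then have "(\<lambda>n. v (A n)) sums v (\<Union>i. A i)" by (intro v_sums) auto
  then show "(\<Sum>i. vol (A i)) = vol (\<Union>i. A i)"
    unfolding vol_def using A by (intro suminf_ennreal_eq v_nonneg) auto
qed

lemma volume_vol: "volume V vol"
  by (rule countably_additive_imp_volume[OF empty_in_V positive_vol countably_additive_vol])

definition pieces_list :: "'a set \<Rightarrow> 'a set list" where
  "pieces_list E = (SOME xs. distinct xs \<and> set xs \<subseteq> V \<and> disjoint (set xs) \<and> \<Union>(set xs) = E)"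

lemma pieces_list:
  assumes "E \<in> R"
  shows "distinct (pieces_list E)" "set (pieces_list E) \<subseteq> V"
    "disjoint (set (pieces_list E))" "\<Union>(set (pieces_list E)) = E"
proof -
  obtain C where C: "finite C" "C \<subseteq> V" "disjoint C" "E = \<Union>C" using assms by (rule S_ofE)
  obtain xs where "set xs = C" "distinct xs" using finite_distinct_list[OF C(1)] by blast
  then have "\<exists>xs. distinct xs \<and> set xs \<subseteq> V \<and> disjoint (set xs) \<and> \<Union>(set xs) = E"
    using C by blast
  from someI_ex[OF this]
  show "distinct (pieces_list E)" "set (pieces_list E) \<subseteq> V"
    "disjoint (set (pieces_list E))" "\<Union>(set (pieces_list E)) = E"
    unfolding pieces_list_def by auto
qed

text \<open>The candidate extension of \<open>vol\<close> to \<open>R\<close>; it does not depend on the decomposition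
  (lemma \<open>mu_eq\<close>).\<close>

definition mu :: "'a set \<Rightarrow> ennreal" where
  "mu E = (\<Sum>c\<in>set (pieces_list E). vol c)"

lemma vol_split:
  assumes C: "C \<subseteq> V" "finite C" "disjoint C" and d: "d \<in> V" "d \<subseteq> \<Union>C"
  shows "vol d = (\<Sum>c\<in>C. mu (c \<inter> d))"
proof -
  have trace_R: "c \<inter> d \<in> R" if "c \<in> C" for c
    using that C d prering by (auto simp: prering_def)
  let ?P = "\<lambda>c. set (pieces_list (c \<inter> d))"
  let ?I = "Sigma C ?P"
  have fin: "finite ?I" using C(2) by auto
  have in_V: "snd p \<in> V" if "p \<in> ?I" for p
  proof -
    obtain c where "c \<in> C" "snd p \<in> ?P c" using \<open>p \<in> ?I\<close> by auto
    then show ?thesis using pieces_list(2)[OF trace_R] by blast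
  qed
  have piece_sub: "e \<subseteq> c \<inter> d" if "c \<in> C" "e \<in> ?P c" for c e
    using that pieces_list(4)[OF trace_R[OF that(1)]] by blast
  have U: "(\<Union>p\<in>?I. snd p) = d"
  proof
    show "(\<Union>p\<in>?I. snd p) \<subseteq> d" using piece_sub by fastforce
    show "d \<subseteq> (\<Union>p\<in>?I. snd p)"
    proof
      fix x assume "x \<in> d"
      then obtain c where "c \<in> C" "x \<in> c \<inter> d" using d by auto
      then obtain e where "e \<in> ?P c" "x \<in> e" using pieces_list(4)[OF trace_R[OF \<open>c \<in> C\<close>]] by blast
      then show "x \<in> (\<Union>p\<in>?I. snd p)" using \<open>c \<in> C\<close> by force
    qed
  qed
  have disj: "disjoint_family_on snd ?I"
    using C(3) pieces_list(3)[OF trace_R] piece_sub by (intro disjoint_family_on_Sigma_snd) auto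
  have "vol d = (\<Sum>p\<in>?I. vol (snd p))"
    using volume_finite_additive[OF volume_vol in_V disj fin] d(1) U by simp
  also have "\<dots> = (\<Sum>c\<in>C. mu (c \<inter> d))"
    unfolding mu_def using C(2) by (simp add: sum.Sigma split_beta)
  finally show ?thesis .
qed

lemma sum_vol_eq:
  assumes C: "C \<subseteq> V" "finite C" "disjoint C" and D: "D \<subseteq> V" "finite D" "disjoint D"
    and eq: "\<Union>C = \<Union>D"
  shows "(\<Sum>d\<in>D. vol d) = (\<Sum>c\<in>C. vol c)"
proof -
  have "(\<Sum>d\<in>D. vol d) = (\<Sum>d\<in>D. \<Sum>c\<in>C. mu (c \<inter> d))"
    using C D eq by (intro sum.cong refl vol_split) auto
  also have "\<dots> = (\<Sum>c\<in>C. \<Sum>d\<in>D. mu (d \<inter> c))"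
    by (subst sum.swap) (simp add: Int_commute)
  also have "\<dots> = (\<Sum>c\<in>C. vol c)"
    using C D eq by (intro sum.cong refl vol_split[symmetric]) auto
  finally show ?thesis .
qed

lemma mu_eq:
  assumes "C \<subseteq> V" "finite C" "disjoint C"
  shows "mu (\<Union>C) = (\<Sum>c\<in>C. vol c)"
proof -
  have "\<Union>C \<in> R" using S_ofI[OF assms(2,1,3)] .
  then show ?thesis
    unfolding mu_def using pieces_list[of "\<Union>C"] assms by (intro sum_vol_eq) auto
qed

lemma mu_V: "a \<in> V \<Longrightarrow> mu a = vol a"
  using mu_eq[of "{a}"] by (simp add: disjoint_def)

lemma volume_mu: "volume R mu"
proof (intro R_ring.volume_additiveI)
  show "mu {} = 0" using mu_eq[of "{}"] by simp
next
  fix a b assume "a \<in> R" "b \<in> R" "a \<inter> b = {}"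
  obtain Ca where Ca: "finite Ca" "Ca \<subseteq> V" "disjoint Ca" "a = \<Union>Ca" using \<open>a \<in> R\<close> by (rule S_ofE)
  obtain Cb where Cb: "finite Cb" "Cb \<subseteq> V" "disjoint Cb" "b = \<Union>Cb" using \<open>b \<in> R\<close> by (rule S_ofE)
  have "Ca \<inter> Cb \<subseteq> {{}}" using \<open>a \<inter> b = {}\<close> Ca Cb by auto
  then have common: "(\<Sum>c\<in>Ca \<inter> Cb. vol c) = 0"
    using vol_empty by (cases "Ca \<inter> Cb = {}") (auto dest: subset_singletonD)
  have "mu (a \<union> b) = mu (\<Union>(Ca \<union> Cb))" using Ca Cb by simp
  also have "\<dots> = (\<Sum>c\<in>Ca \<union> Cb. vol c)"
    using \<open>a \<inter> b = {}\<close> Ca Cb by (intro mu_eq) (auto intro!: disjoint_union)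
  also have "\<dots> = (\<Sum>c\<in>Ca. vol c) + (\<Sum>c\<in>Cb. vol c)"
    using Ca Cb common by (simp add: sum.union_inter[symmetric])
  also have "\<dots> = mu a + mu b" using Ca Cb by (simp add: mu_eq)
  finally show "mu (a \<union> b) = mu a + mu b" .
qed simp

lemma positive_mu: "positive R mu"
  using volume_mu unfolding positive_def by (auto intro!: volume_empty)

definition pieces :: "'a set \<Rightarrow> nat \<Rightarrow> 'a set" where
  "pieces E = pad (pieces_list E)"

lemma pieces_V: "E \<in> R \<Longrightarrow> pieces E j \<in> V"
  using pieces_list(2)[of E] empty_in_V nth_mem[of j "pieces_list E"]
  by (auto simp: pieces_def pad_def)

lemma UN_pieces: "E \<in> R \<Longrightarrow> (\<Union>j. pieces E j) = E"
  using pieces_list(4)[of E] by (simp add: pieces_def UN_pad)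

lemma disjoint_family_pieces: "E \<in> R \<Longrightarrow> disjoint_family (pieces E)"
  using pieces_list(1,3)[of E] unfolding pieces_def by (rule disjoint_family_pad)

lemma suminf_pieces: "E \<in> R \<Longrightarrow> (\<Sum>j. vol (pieces E j)) = mu E"
  using suminf_pad[of vol "pieces_list E"] vol_empty pieces_list(1)[of E]
  by (simp add: pieces_def mu_def)

definition flat_pieces :: "(nat \<Rightarrow> 'a set) \<Rightarrow> nat \<Rightarrow> 'a set" where
  "flat_pieces F k = (case prod_decode k of (i, j) \<Rightarrow> pieces (F i) j)"

lemma flat_pieces_V: "range F \<subseteq> R \<Longrightarrow> flat_pieces F k \<in> V"
  using pieces_V by (auto simp: flat_pieces_def split: prod.split)

lemma UN_flat_pieces:
  assumes "range F \<subseteq> R"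
  shows "(\<Union>k. flat_pieces F k) = (\<Union>i. F i)"
proof
  have FR: "F i \<in> R" for i using assms by auto
  show "(\<Union>k. flat_pieces F k) \<subseteq> (\<Union>i. F i)"
    using UN_pieces[OF FR] by (force simp: flat_pieces_def split: prod.split)
  show "(\<Union>i. F i) \<subseteq> (\<Union>k. flat_pieces F k)"
  proof
    fix x assume "x \<in> (\<Union>i. F i)"
    then obtain i where "x \<in> F i" by blast
    then obtain j where "x \<in> pieces (F i) j" using UN_pieces[OF FR, of i] by blast
    moreover have "flat_pieces F (prod_encode (i, j)) = pieces (F i) j"
      by (simp only: flat_pieces_def prod_encode_inverse prod.case)
    ultimately show "x \<in> (\<Union>k. flat_pieces F k)" by (metis UN_I UNIV_I)
  qed
qed

lemma disjoint_family_flat_pieces: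
  assumes "range F \<subseteq> R" "disjoint_family F"
  shows "disjoint_family (flat_pieces F)"
proof -
  have FR: "F i \<in> R" for i using assms by auto
  show ?thesis
    unfolding flat_pieces_def using assms(2) disjoint_family_pieces[OF FR] UN_pieces[OF FR]
    by (intro disjoint_family_flatten) blast+
qed

lemma suminf_flat_pieces:
  assumes "range F \<subseteq> R"
  shows "(\<Sum>k. vol (flat_pieces F k)) = (\<Sum>i. mu (F i))"
  unfolding flat_pieces_def using assms
  by (subst suminf_ennreal_2dimen[where g="\<lambda>i. mu (F i)"])
     (simp_all add: suminf_pieces image_subset_iff split_beta)

text \<open>Countable additivity of \<open>mu\<close> for partitions of a member of \<open>V\<close>: refine the partition into
  pieces from \<open>V\<close> and use countable additivity of \<open>v\<close> itself.\<close>

lemma suminf_mu_partition_V: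
  assumes c: "c \<in> V" and A: "range A \<subseteq> R" "disjoint_family A" "(\<Union>n. A n) = c"
  shows "(\<Sum>n. mu (A n)) = vol c"
proof -
  have "range (flat_pieces A) \<subseteq> V" using flat_pieces_V[OF A(1)] by auto
  moreover have "(\<Union>k. flat_pieces A k) = c" using UN_flat_pieces[OF A(1)] A(3) by simp
  ultimately have "(\<Sum>k. vol (flat_pieces A k)) = vol c"
    using countably_additive_vol disjoint_family_flat_pieces[OF A(1,2)] c
    unfolding countably_additive_def by metis
  then show ?thesis using suminf_flat_pieces[OF A(1)] by simp
qed

text \<open>General case: split every member of the partition along the pieces of the union and
  apply the previous lemma to each piece.\<close>

lemma countably_additive_mu: "countably_additive R mu"
proof (rule countably_additiveI)
  fix A :: "nat \<Rightarrow> 'a set"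
  assume A: "range A \<subseteq> R" "disjoint_family A" "(\<Union>n. A n) \<in> R"
  define U where "U = (\<Union>n. A n)"
  let ?C = "set (pieces_list U)"
  have C: "?C \<subseteq> V" "finite ?C" "disjoint ?C" "\<Union>?C = U"
    using pieces_list[of U] A(3) by (simp_all add: U_def)
  have trace_R: "A n \<inter> c \<in> R" if "c \<in> ?C" for n c
    using that A(1) C(1) V_in_R by (intro R_ring.Int) auto
  have trace_disj: "disjoint_family_on (\<lambda>c. A n \<inter> c) ?C" for n
    using C(3) by (auto simp: disjoint_family_on_def disjoint_def)
  have "mu (A n) = (\<Sum>c\<in>?C. mu (A n \<inter> c))" for n
  proof -
    have eq: "(\<Union>c\<in>?C. A n \<inter> c) = A n" using C(4) by (auto simp: U_def)
    have "A n \<in> R" using A(1) by auto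
    then have "mu (\<Union>c\<in>?C. A n \<inter> c) = (\<Sum>c\<in>?C. mu (A n \<inter> c))"
      using eq by (intro volume_finite_additive[OF volume_mu trace_R trace_disj C(2)]) simp_all
    then show ?thesis using eq by simp
  qed
  then have "(\<Sum>n. mu (A n)) = (\<Sum>c\<in>?C. \<Sum>n. mu (A n \<inter> c))"
    by (simp add: suminf_sum)
  also have "\<dots> = (\<Sum>c\<in>?C. vol c)"
  proof (rule sum.cong)
    fix c assume "c \<in> ?C"
    then have "(\<Union>n. A n \<inter> c) = c" using C(4) by (auto simp: U_def)
    moreover have "disjoint_family (\<lambda>n. A n \<inter> c)"
      using A(2) unfolding disjoint_family_on_def by blast
    ultimately show "(\<Sum>n. mu (A n \<inter> c)) = vol c"
      using \<open>c \<in> ?C\<close> C(1) trace_R by (intro suminf_mu_partition_V) auto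
  qed simp
  also have "\<dots> = mu U" using mu_eq[OF C(1-3)] C(4) by simp
  finally show "(\<Sum>n. mu (A n)) = mu (\<Union>n. A n)" by (simp only: U_def)
qed

lemma increasing_mu: "increasing R mu"
  using R_ring.additive_increasing[OF positive_mu]
    R_ring.countably_additive_additive[OF positive_mu countably_additive_mu] by blast

text \<open>Carath\'eodory's outer measure of \<open>mu\<close>; it is a measure on \<open>\<sigma>(R)\<close> (as in the proof of
  the library theorem \<open>caratheodory'\<close>) that agrees with \<open>mu\<close> on \<open>R\<close>.\<close>

definition outer :: "'a set \<Rightarrow> ennreal" where
  "outer = outer_measure R mu"

lemma measure_space_outer: "measure_space X (sigma_sets X R) outer"
proof -
  define L where "L = lambda_system X (Pow X) outer"
  have L: "measure_space X L outer"
    using sigma_algebra.caratheodory_lemma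
      [OF sigma_algebra_Pow R_ring.outer_measure_space_outer_measure[OF positive_mu increasing_mu]]
    by (simp add: L_def outer_def)
  have "R \<subseteq> L"
    using R_ring.algebra_subset_lambda_system[OF positive_mu increasing_mu]
      R_ring.countably_additive_additive[OF positive_mu countably_additive_mu]
    by (simp add: L_def outer_def)
  then have "sigma_sets X R \<subseteq> L"
    using sigma_algebra.sigma_sets_subset[of X L R] L by (simp add: measure_space_def)
  then show ?thesis
    by (intro measure_down[OF L] sigma_algebra_sigma_sets) (simp_all add: R_ring.space_closed)
qed

lemma outer_R: "E \<in> R \<Longrightarrow> outer E = mu E"
  unfolding outer_def by (rule R_ring.outer_measure_agrees[OF positive_mu countably_additive_mu])

definition M :: "'a measure" where
  "M = measure_of X (sigma_sets X R) outer"

lemma R_Pow: "R \<subseteq> Pow X"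
  using ring by (simp add: ring_of_sets_iff)

lemma sets_M: "sets M = sigma_sets X R"
  unfolding M_def by (rule sigma_algebra.sets_measure_of_eq[OF sigma_algebra_sigma_sets[OF R_Pow]])

lemma space_M[simp]: "space M = X"
  unfolding M_def by (rule sigma_algebra.space_measure_of_eq[OF sigma_algebra_sigma_sets[OF R_Pow]])

lemma emeasure_M: "E \<in> sets M \<Longrightarrow> emeasure M E = outer E"
  using emeasure_measure_of_sigma[of X "sigma_sets X R" outer E] measure_space_outer
  by (simp add: M_def[symmetric] sets_M measure_space_def)

lemma R_sets: "E \<in> R \<Longrightarrow> E \<in> sets M"
  by (simp add: sets_M)

lemma V_sets: "E \<in> V \<Longrightarrow> E \<in> sets M"
  by (simp add: R_sets V_in_R)

lemma emeasure_V: "E \<in> V \<Longrightarrow> emeasure M E = ennreal (v E)"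
  by (simp add: emeasure_M V_sets outer_R V_in_R mu_V vol_def)

lemma cover_by_V:
  assumes "B \<in> sets M" "emeasure M B < ennreal e"
  obtains G where "range G \<subseteq> V" "B \<subseteq> (\<Union>k. G k)" "summable (\<lambda>k. v (G k))" "(\<Sum>k. v (G k)) < e"
proof -
  have "outer B < ennreal e" using assms by (simp add: emeasure_M)
  then have "\<exists>F. range F \<subseteq> R \<and> disjoint_family F \<and> B \<subseteq> (\<Union>i. F i) \<and> (\<Sum>i. mu (F i)) < ennreal e"
    unfolding outer_def by (rule R_ring.outer_measure_close)
  then obtain F where F: "range F \<subseteq> R" "B \<subseteq> (\<Union>i. F i)" "(\<Sum>i. mu (F i)) < ennreal e"
    by blast
  define G where "G = flat_pieces F"
  have GV: "range G \<subseteq> V" using flat_pieces_V[OF F(1)] by (auto simp: G_def)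
  have cover: "B \<subseteq> (\<Union>k. G k)" using F(2) UN_flat_pieces[OF F(1)] by (simp add: G_def)
  have v_nonneg_G: "0 \<le> v (G k)" for k using GV v_nonneg by auto
  have lt: "(\<Sum>k. ennreal (v (G k))) < ennreal e"
    using F(3) suminf_flat_pieces[OF F(1)] by (simp add: G_def vol_def)
  then have not_top: "(\<Sum>k. ennreal (v (G k))) \<noteq> top" by (auto simp: top_unique)
  have sm: "summable (\<lambda>k. v (G k))" using summable_suminf_not_top[OF v_nonneg_G not_top] .
  have bound: "(\<Sum>k. v (G k)) < e"
    using lt suminf_ennreal[OF v_nonneg_G not_top] ennreal_less_iff[OF suminf_nonneg[OF sm v_nonneg_G]]
    by simp
  show ?thesis by (rule that[OF GV cover sm bound])
qed

end

section \<open>Null sets and approximation in the finite case \<open>X \<in> V\<close>\<close>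

locale finite_prering_measure = prering_measure +
  assumes X_in_V: "X \<in> V"
begin

lemma finite_measure_M: "finite_measure M"
  by (rule finite_measureI) (simp add: emeasure_V X_in_V)

sublocale M: finite_measure M by (rule finite_measure_M)

lemma measure_V: "E \<in> V \<Longrightarrow> measure M E = v E"
  by (simp add: measure_def emeasure_V v_nonneg)

lemma measure_UN_V_le:
  assumes G: "range G \<subseteq> V" "summable (\<lambda>k. v (G k))"
  shows "measure M (\<Union>k. G k) \<le> (\<Sum>k. v (G k))"
proof -
  have "(\<Sum>k. emeasure M (G k)) = (\<Sum>k. ennreal (v (G k)))"
    using G by (simp add: emeasure_V subset_eq)
  also have "\<dots> \<noteq> \<infinity>"
    using ennreal_suminf_neq_top[OF G(2)] G(1) v_nonneg by auto
  finally have "measure M (\<Union>k. G k) \<le> (\<Sum>k. measure M (G k))"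
    using G by (intro measure_subadditive_countably) (auto intro: V_sets)
  also have "\<dots> = (\<Sum>k. v (G k))" using G by (simp add: measure_V subset_eq)
  finally show ?thesis .
qed

text \<open>A null set
  has covers of content \<open>< 1/(k+1)\<close> for every \<open>k\<close>; their intersection is an \<open>M\<close>-null superset.\<close>

lemma null_set_imp_null_sets:
  assumes "null_set V v D"
  obtains N where "N \<in> null_sets M" "D \<subseteq> N"
proof -
  have "\<forall>k::nat. \<exists>G. range G \<subseteq> V \<and> D \<subseteq> (\<Union>t. G t) \<and> summable (\<lambda>t. v (G t)) \<and>
      (\<Sum>t. v (G t)) < 1 / Suc k"
    using assms unfolding null_set_def by simp
  then obtain G where G: "\<And>k. range (G k) \<subseteq> V" "\<And>k. D \<subseteq> (\<Union>t. G k t)"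
    "\<And>k. summable (\<lambda>t. v (G k t))" "\<And>k. (\<Sum>t. v (G k t)) < 1 / Suc k"
    by metis
  define N where "N = (\<Inter>k. \<Union>t. G k t)"
  have U_sets: "(\<Union>t. G k t) \<in> sets M" for k using G(1)[of k] V_sets by blast
  then have N_sets: "N \<in> sets M" unfolding N_def by blast
  have "measure M N \<le> 1 / Suc k" for k
  proof -
    have "measure M N \<le> measure M (\<Union>t. G k t)"
      using U_sets by (intro M.finite_measure_mono) (auto simp: N_def)
    also have "\<dots> \<le> (\<Sum>t. v (G k t))" using G by (intro measure_UN_V_le) auto
    finally show ?thesis using G(4)[of k] by linarith
  qed
  then have "measure M N = 0" using nonpos_if_le_inverse_Suc measure_nonneg by (metis antisym)
  then have "N \<in> null_sets M" using N_sets by (intro null_setsI) (simp_all add: M.emeasure_eq_measure)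
  moreover have "D \<subseteq> N" using G(2) by (auto simp: N_def)
  ultimately show ?thesis by (rule that)
qed

lemma null_set_iff: "null_set V v D \<longleftrightarrow> (\<exists>N\<in>null_sets M. D \<subseteq> N)"
proof
  assume "null_set V v D"
  then obtain N where "N \<in> null_sets M" "D \<subseteq> N" by (rule null_set_imp_null_sets)
  then show "\<exists>N\<in>null_sets M. D \<subseteq> N" by blast
next
  assume "\<exists>N\<in>null_sets M. D \<subseteq> N"
  then obtain N where N: "N \<in> null_sets M" "D \<subseteq> N" by blast
  show "null_set V v D"
    unfolding null_set_def
  proof (intro allI impI)
    fix e :: real assume "0 < e"
    then have "emeasure M N < ennreal e" using N(1) by auto
    then obtain G where "range G \<subseteq> V" "N \<subseteq> (\<Union>k. G k)" "summable (\<lambda>k. v (G k))" "(\<Sum>k. v (G k)) < e"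
      using cover_by_V N(1) by blast
    then show "\<exists>G. range G \<subseteq> V \<and> D \<subseteq> (\<Union>t. G t) \<and> summable (\<lambda>t. v (G t)) \<and> (\<Sum>t. v (G t)) < e"
      using N(2) by blast
  qed
qed

lemma null_set_subset: "null_set V v D \<Longrightarrow> D' \<subseteq> D \<Longrightarrow> null_set V v D'"
  unfolding null_set_iff by blast

lemma null_set_Un:
  assumes "null_set V v D1" "null_set V v D2"
  shows "null_set V v (D1 \<union> D2)"
proof -
  obtain N1 N2 where "N1 \<in> null_sets M" "N2 \<in> null_sets M" "D1 \<subseteq> N1" "D2 \<subseteq> N2"
    using assms unfolding null_set_iff by blast
  then have "N1 \<union> N2 \<in> null_sets M" "D1 \<union> D2 \<subseteq> N1 \<union> N2" by auto
  then show ?thesis unfolding null_set_iff by blast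
qed

lemma symdiff_null_transfer:
  assumes "null_set V v D" "null_set V v (symdiff B B')" "A = symdiff B D"
  shows "\<exists>D'. null_set V v D' \<and> A = symdiff B' D'"
proof -
  have "symdiff A B' \<subseteq> D \<union> symdiff B B'" using assms(3) by (auto simp: symdiff_def)
  then have "null_set V v (symdiff A B')" using assms(1,2) by (blast intro: null_set_Un null_set_subset)
  moreover have "A = symdiff B' (symdiff A B')" by (auto simp: symdiff_def)
  ultimately show ?thesis by blast
qed

lemma outer_approx:
  assumes B: "B \<in> sets M"
  obtains B' where "B' \<in> delta_of (sigma_of V)" "B \<subseteq> B'" "B' - B \<in> null_sets M"
proof -
  have "\<exists>G. range G \<subseteq> V \<and> B \<subseteq> (\<Union>t. G t) \<and> summable (\<lambda>t. v (G t)) \<and>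
      (\<Sum>t. v (G t)) < measure M B + 1 / Suc k" for k :: nat
  proof -
    have "emeasure M B < ennreal (measure M B + 1 / Suc k)"
      by (simp add: M.emeasure_eq_measure ennreal_lessI add_nonneg_pos)
    then show ?thesis using cover_by_V[OF B] by metis
  qed
  then obtain G where G: "\<And>k. range (G k) \<subseteq> V" "\<And>k. B \<subseteq> (\<Union>t. G k t)"
    "\<And>k. summable (\<lambda>t. v (G k t))" "\<And>k. (\<Sum>t. v (G k t)) < measure M B + 1 / Suc k"
    by metis
  define U where "U k = (\<Union>t. G k t)" for k
  define B' where "B' = (\<Inter>k. U k)"
  have U_sets: "U k \<in> sets M" for k unfolding U_def using G(1)[of k] V_sets by blast
  then have B'_sets: "B' \<in> sets M" unfolding B'_def by blast
  have "U k \<in> sigma_of V" for k unfolding U_def sigma_of_def using G(1) by blast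
  then have "B' \<in> delta_of (sigma_of V)" unfolding B'_def delta_of_def by blast
  moreover have sub: "B \<subseteq> B'" using G(2) by (auto simp: B'_def U_def)
  moreover have "measure M (B' - B) \<le> 1 / Suc k" for k
  proof -
    have "measure M (B' - B) = measure M B' - measure M B"
      using B'_sets B sub by (intro M.finite_measure_Diff)
    also have "measure M B' \<le> measure M (U k)"
      using U_sets by (intro M.finite_measure_mono) (auto simp: B'_def)
    also have "measure M (U k) \<le> (\<Sum>t. v (G k t))"
      unfolding U_def using G by (intro measure_UN_V_le) auto
    finally show ?thesis using G(4)[of k] by linarith
  qed
  then have "measure M (B' - B) = 0" using nonpos_if_le_inverse_Suc measure_nonneg by (metis antisym)
  then have "B' - B \<in> null_sets M" using B'_sets B by (intro null_setsI) (auto simp: M.emeasure_eq_measure)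
  ultimately show ?thesis using that by blast
qed

lemma measurable_symdiff_null_delta_sigma_V:
  assumes B: "B \<in> sets M" and D: "null_set V v D" and A: "A = symdiff B D"
  shows "\<exists>B' D'. B' \<in> delta_of (sigma_of V) \<and> null_set V v D' \<and> A = symdiff B' D'"
proof -
  obtain B' where B': "B' \<in> delta_of (sigma_of V)" "B \<subseteq> B'" "B' - B \<in> null_sets M"
    using outer_approx[OF B] by blast
  have "symdiff B B' = B' - B" using B'(2) by (auto simp: symdiff_def)
  then have "null_set V v (symdiff B B')" using B'(3) unfolding null_set_iff by blast
  then show ?thesis using symdiff_null_transfer[OF D _ A] B'(1) by blast
qed

lemma ring_approx:
  assumes B: "B \<in> sets M" and e: "0 < e"
  obtains P where "P \<in> R" "measure M (symdiff P B) < e"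
proof -
  have "emeasure M B < ennreal (measure M B + e/2)"
    using e by (simp add: M.emeasure_eq_measure ennreal_lessI)
  then obtain G where G: "range G \<subseteq> V" "B \<subseteq> (\<Union>k. G k)" "summable (\<lambda>k. v (G k))"
      "(\<Sum>k. v (G k)) < measure M B + e/2"
    using cover_by_V[OF B] by metis
  define U where "U = (\<Union>k. G k)"
  have U_sets: "U \<in> sets M" unfolding U_def using G(1) V_sets by blast
  have mU: "measure M U < measure M B + e/2"
    using measure_UN_V_le[OF G(1,3)] G(4) unfolding U_def by linarith
  define Q where "Q n = (\<Union>k<n. G k)" for n
  have Q_R: "Q n \<in> R" for n
    unfolding Q_def using G(1) by (intro R_ring.finite_UN) (auto intro: V_in_R)
  have "(\<lambda>n. measure M (Q n)) \<longlonglongrightarrow> measure M U"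
  proof -
    have "range Q \<subseteq> sets M" by (simp add: image_subset_iff Q_R R_sets)
    moreover have "incseq Q" unfolding incseq_def Q_def by (force intro!: UN_mono)
    moreover have "(\<Union>n. Q n) = U" unfolding Q_def U_def using UN_UN_finite_eq[of G] by (simp add: atLeast0LessThan)
    ultimately show ?thesis using M.finite_Lim_measure_incseq[of Q] by simp
  qed
  then have "eventually (\<lambda>n. measure M U - e/2 < measure M (Q n)) sequentially"
    using e by (intro order_tendstoD) auto
  then obtain n where n: "measure M U - e/2 < measure M (Q n)"
    by (auto simp: eventually_sequentially)
  have Q_sub: "Q n \<subseteq> U" and B_sub: "B \<subseteq> U" using G(2) by (auto simp: Q_def U_def)
  have "measure M (symdiff (Q n) B) \<le> measure M ((U - B) \<union> (U - Q n))"
    using Q_sub B_sub B U_sets R_sets[OF Q_R[of n]]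
    by (intro M.finite_measure_mono) (auto simp: symdiff_def)
  also have "\<dots> \<le> measure M (U - B) + measure M (U - Q n)"
    using B U_sets R_sets[OF Q_R[of n]] by (intro measure_subadditive) (auto simp: M.emeasure_finite)
  also have "\<dots> = (measure M U - measure M B) + (measure M U - measure M (Q n))"
    using B U_sets B_sub Q_sub R_sets[OF Q_R[of n]] by (simp add: M.finite_measure_Diff)
  finally have "measure M (symdiff (Q n) B) < e" using n mU by linarith
  then show ?thesis using that Q_R by blast
qed

end

section \<open>Simple functions in the finite case\<close>

context finite_prering_measure
begin

lemma simple_rep_integral:
  assumes "simple_rep V h n r A"
  shows "(\<Sum>i<n. r i * v (A i)) = integral\<^sup>L M h"
proof -
  have A_V: "\<And>i. i < n \<Longrightarrow> A i \<in> V" and h: "h = (\<lambda>x. \<Sum>i<n. r i * indicator (A i) x)"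
    using assms by (auto simp: simple_rep_def)
  have "integrable M (\<lambda>x. r i * indicator (A i) x)" if "i < n" for i
  proof -
    have "A i \<inter> space M = A i" using A_V[OF that] V_Pow by auto
    then show ?thesis using V_sets[OF A_V[OF that]]
      by (intro integrable_mult_right) (simp add: integrable_indicator_iff less_top[symmetric])
  qed
  then have "integral\<^sup>L M h = (\<Sum>i<n. integral\<^sup>L M (\<lambda>x. r i * indicator (A i) x))"
    unfolding h by (intro Bochner_Integration.integral_sum) auto
  also have "\<dots> = (\<Sum>i<n. r i * v (A i))"
  proof (rule sum.cong)
    fix i assume "i \<in> {..<n}"
    then have "A i \<in> V" "A i \<inter> X = A i" using A_V V_Pow by auto
    then show "integral\<^sup>L M (\<lambda>x. r i * indicator (A i) x) = r i * v (A i)"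
      by (simp add: measure_V)
  qed simp
  finally show ?thesis by simp
qed

text \<open>Since \<open>simple_int\<close> picks some representation, it equals the Lebesgue integral.\<close>

lemma simple_int_eq_integral:
  assumes "simple_fun V h"
  shows "simple_int V v h = integral\<^sup>L M h"
proof -
  have "\<exists>s. \<exists>n r A. simple_rep V h n r A \<and> s = (\<Sum>i<n. r i * v (A i))"
    using assms by (auto simp: simple_fun_def)
  from someI_ex[OF this] obtain n r A
    where "simple_rep V h n r A" "simple_int V v h = (\<Sum>i<n. r i * v (A i))"
    unfolding simple_int_def by blast
  then show ?thesis using simple_rep_integral by simp
qed

lemma indicator_pieces:
  assumes "E \<in> R"
  shows "indicator E x = (\<Sum>j<length (pieces_list E). indicator (pieces E j) x :: real)"
proof -
  have "E = (\<Union>j<length (pieces_list E). pieces E j)"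
    using UN_pieces[OF assms] by (auto simp: pieces_def pad_def split: if_split_asm)
  moreover have "disjoint_family_on (pieces E) {..<length (pieces_list E)}"
    using disjoint_family_pieces[OF assms] by (auto simp: disjoint_family_on_def)
  ultimately show ?thesis by (metis indicator_UN_disjoint finite_lessThan)
qed


lemma simple_fun_two:
  assumes E: "E1 \<in> R" "E2 \<in> R" "E1 \<inter> E2 = {}"
  shows "simple_fun V (\<lambda>x. a * indicator E1 x + b * indicator E2 x)"
proof -
  define L1 where "L1 = length (pieces_list E1)"
  define L2 where "L2 = length (pieces_list E2)"
  define A where "A i = (if i < L1 then pieces E1 i else pieces E2 (i - L1))" for i
  define r where "r i = (if i < L1 then a else b)" for i
  have sub1: "pieces E1 k \<subseteq> E1" and sub2: "pieces E2 k \<subseteq> E2" for k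
    using UN_pieces[OF E(1)] UN_pieces[OF E(2)] by blast+
  have A_V: "\<forall>i<L1 + L2. A i \<in> V" using pieces_V E by (auto simp: A_def)
  have "disjoint_family_on A {..<L1 + L2}"
    unfolding disjoint_family_on_def
  proof (intro ballI impI)
    fix i j assume "i \<in> {..<L1 + L2}" "j \<in> {..<L1 + L2}" "i \<noteq> j"
    show "A i \<inter> A j = {}"
    proof (cases "i < L1"; cases "j < L1")
      assume "i < L1" "j < L1"
      then show ?thesis using disjoint_family_pieces[OF E(1)] \<open>i \<noteq> j\<close>
        by (auto simp: A_def disjoint_family_on_def)
    next
      assume "\<not> i < L1" "\<not> j < L1"
      then have "i - L1 \<noteq> j - L1" using \<open>i \<noteq> j\<close> by auto
      then show ?thesis using disjoint_family_pieces[OF E(2)] \<open>\<not> i < L1\<close> \<open>\<not> j < L1\<close>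
        by (auto simp: A_def disjoint_family_on_def)
    qed (use sub1 sub2 E(3) in \<open>auto simp: A_def, blast+\<close>)
  qed
  moreover have "a * indicator E1 x + b * indicator E2 x = (\<Sum>i<L1 + L2. r i * indicator (A i) x)" for x
    by (simp add: sum_lessThan_add r_def A_def indicator_pieces[OF E(1)] indicator_pieces[OF E(2)]
        sum_distrib_left L1_def L2_def)
  ultimately show ?thesis
    unfolding simple_fun_def simple_rep_def using A_V by blast
qed

lemma simple_int_two:
  assumes E: "E1 \<in> R" "E2 \<in> R" "E1 \<inter> E2 = {}"
  shows "simple_int V v (\<lambda>x. a * indicator E1 x + b * indicator E2 x) = a * measure M E1 + b * measure M E2"
proof -
  have "E1 \<in> sets M" "E2 \<in> sets M" "E1 \<inter> X = E1" "E2 \<inter> X = E2"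
    using E R_sets R_Pow by auto
  moreover have "emeasure M E1 < \<infinity>" "emeasure M E2 < \<infinity>"
    using M.emeasure_finite by (simp_all add: less_top[symmetric])
  ultimately show ?thesis using simple_int_eq_integral[OF simple_fun_two[OF E]] by simp
qed

end

section \<open>Measurable sets modulo null sets belong to \<open>V\<^sub>c\<close>\<close>

context finite_prering_measure
begin

lemma indicator_diff_simple:
  assumes P: "P \<in> R" "P' \<in> R" and B: "B \<in> sets M"
  shows "simple_fun V (\<lambda>x. indicator P x - indicator P' x :: real)"
    and "simple_norm V v (\<lambda>x. indicator P x - indicator P' x :: real)
      \<le> measure M (symdiff P B) + measure M (symdiff P' B)"
proof -
  define E1 where "E1 = P - P'"
  define E2 where "E2 = P' - P"
  have E: "E1 \<in> R" "E2 \<in> R" "E1 \<inter> E2 = {}"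
    using P S_of_Diff[OF prering] by (auto simp: E1_def E2_def)
  have h_eq: "(\<lambda>x. indicator P x - indicator P' x :: real) = (\<lambda>x. 1 * indicator E1 x + (-1) * indicator E2 x)"
    by (auto simp: E1_def E2_def indicator_def fun_eq_iff)
  show "simple_fun V (\<lambda>x. indicator P x - indicator P' x :: real)"
    unfolding h_eq by (rule simple_fun_two[OF E])
  have abs_eq: "(\<lambda>x. \<bar>indicator P x - indicator P' x :: real\<bar>) = (\<lambda>x. 1 * indicator E1 x + 1 * indicator E2 x)"
    by (auto simp: E1_def E2_def indicator_def fun_eq_iff)
  have P_sets: "P \<in> sets M" "P' \<in> sets M" using P R_sets by auto
  have "simple_norm V v (\<lambda>x. indicator P x - indicator P' x :: real) = measure M E1 + measure M E2"
    unfolding simple_norm_def abs_eq using simple_int_two[OF E, of 1 1] by simp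
  also have "\<dots> = measure M (E1 \<union> E2)"
    using E R_sets by (intro M.finite_measure_Union[symmetric]) auto
  also have "\<dots> \<le> measure M (symdiff P B \<union> symdiff P' B)"
    using P_sets B by (intro M.finite_measure_mono) (auto simp: E1_def E2_def symdiff_def)
  also have "\<dots> \<le> measure M (symdiff P B) + measure M (symdiff P' B)"
    using P_sets B by (intro measure_subadditive) (auto simp: symdiff_def M.emeasure_finite)
  finally show "simple_norm V v (\<lambda>x. indicator P x - indicator P' x :: real)
      \<le> measure M (symdiff P B) + measure M (symdiff P' B)" .
qed

text \<open>If the ring sets \<open>P n\<close> (with \<open>P 0 = {}\<close>) approximate \<open>B\<close> at the geometric rate \<open>c / 4\<^sup>n\<close>,
  then their indicators form a basic sequence: the increments \<open>1\<^sub>P\<^sub>n - 1\<^sub>P\<^sub>n\<^sub>-\<^sub>1\<close> are simple with norm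
  \<open>\<le> 5c / 4\<^sup>n\<close>.\<close>

lemma basic_seq_indicators:
  assumes P: "\<And>n. P n \<in> R" "P 0 = {}" and B: "B \<in> sets M"
    and bound: "\<And>n. measure M (symdiff (P n) B) \<le> c / 4 ^ n"
  shows "basic_seq V v (\<lambda>n. indicator (P n) :: 'a \<Rightarrow> real)"
proof -
  define h :: "nat \<Rightarrow> 'a \<Rightarrow> real"
    where "h n = (\<lambda>x. indicator (P n) x - indicator (P (n - 1)) x)" for n
  have telescope: "indicator (P n) = (\<lambda>x. \<Sum>k\<in>{1..n}. h k x)" for n :: nat
  proof (induction n)
    case (Suc n)
    then show ?case by (simp add: h_def fun_eq_iff)
  qed (simp add: P(2) fun_eq_iff)
  have increment: "simple_fun V (h n) \<and> simple_norm V v (h n) \<le> 5 * c / 4 ^ n" if "n \<ge> 1" for n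
  proof -
    have "simple_norm V v (h n) \<le> c / 4 ^ n + c / 4 ^ (n - 1)"
      using indicator_diff_simple(2)[OF P(1) P(1) B, of n "n - 1"] bound[of n] bound[of "n - 1"]
      unfolding h_def by linarith
    also have "\<dots> = 5 * c / 4 ^ n"
      using that by (cases n) (simp_all add: field_simps)
    finally show ?thesis
      using indicator_diff_simple(1)[OF P(1) P(1) B, of n "n - 1"] by (simp add: h_def)
  qed
  show ?thesis
    unfolding basic_seq_def using increment telescope by blast
qed

text \<open>If the measures of \<open>P n \<triangle> B\<close> are summable, then \<open>1\<^sub>P\<^sub>n \<rightarrow> 1\<^sub>B\<close> outside a null set
  (Borel--Cantelli).\<close>

lemma indicators_converge_ae:
  assumes P: "\<And>n. P n \<in> sets M" and B: "B \<in> sets M"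
    and summable: "summable (\<lambda>n. measure M (symdiff (P n) B))"
  shows "null_set V v {x\<in>X. \<not> (\<lambda>n. indicator (P n) x :: real) \<longlonglongrightarrow> indicator B x}"
proof -
  let ?E = "\<lambda>n. symdiff (P n) B"
  have E_sets: "?E n \<in> sets M" for n using P B by (auto simp: symdiff_def)
  have "limsup ?E \<in> null_sets M"
    using E_sets summable by (intro borel_cantelli_limsup1) (auto simp: M.emeasure_finite less_top[symmetric])
  moreover have "{x\<in>X. \<not> (\<lambda>n. indicator (P n) x :: real) \<longlonglongrightarrow> indicator B x} \<subseteq> limsup ?E"
  proof
    fix x assume x: "x \<in> {x\<in>X. \<not> (\<lambda>n. indicator (P n) x :: real) \<longlonglongrightarrow> indicator B x}"
    show "x \<in> limsup ?E"
    proof (rule ccontr)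
      assume "x \<notin> limsup ?E"
      then have "eventually (\<lambda>n. x \<notin> ?E n) sequentially"
        by (auto simp: limsup_INF_SUP eventually_sequentially)
      then have "eventually (\<lambda>n. indicator (P n) x = (indicator B x :: real)) sequentially"
        by eventually_elim (auto simp: symdiff_def indicator_def)
      then have "(\<lambda>n. indicator (P n) x :: real) \<longlonglongrightarrow> indicator B x"
        by (rule tendsto_eventually)
      then show False using x by simp
    qed
  qed
  ultimately show ?thesis unfolding null_set_iff by blast
qed

lemma ring_approx_geometric:
  assumes B: "B \<in> sets M"
  obtains P where "\<And>n. P n \<in> R" "P 0 = {}"
    "\<And>n. measure M (symdiff (P n) B) \<le> (1 + measure M B) / 4 ^ n"
proof -
  have "\<exists>Q. Q \<in> R \<and> measure M (symdiff Q B) < 1 / 4 ^ n" for n :: nat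
    using ring_approx[OF B, of "1 / 4 ^ n"] by auto
  then obtain Q where Q: "\<And>n. Q n \<in> R" "\<And>n. measure M (symdiff (Q n) B) < 1 / 4 ^ n"
    by metis
  define P where "P n = (if n = 0 then {} else Q n)" for n
  have "measure M (symdiff (P n) B) \<le> (1 + measure M B) / 4 ^ n" for n
  proof (cases "n = 0")
    case False
    then have "measure M (symdiff (P n) B) \<le> 1 / 4 ^ n" using Q(2)[of n] by (simp add: P_def)
    also have "\<dots> \<le> (1 + measure M B) / 4 ^ n" by (simp add: divide_right_mono)
    finally show ?thesis .
  qed (simp add: P_def symdiff_def)
  moreover have "P n \<in> R" for n by (simp add: P_def Q(1) S_of_empty)
  ultimately show ?thesis using that[of P] by (simp add: P_def)
qed

lemma measurable_symdiff_null_in_Vc: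
  assumes B: "B \<in> sets M" and D: "null_set V v D" and A: "A = symdiff B D" "A \<subseteq> X"
  shows "A \<in> V_c X V v"
proof -
  obtain P where P: "\<And>n. P n \<in> R" "P 0 = {}"
    and bound: "\<And>n. measure M (symdiff (P n) B) \<le> (1 + measure M B) / 4 ^ n"
    using ring_approx_geometric[OF B] by blast
  have "summable (\<lambda>n. measure M (symdiff (P n) B))"
  proof (rule summable_comparison_test)
    show "summable (\<lambda>n. (1 + measure M B) * (1/4) ^ n)" by (intro summable_mult summable_geometric) simp
    show "\<exists>N. \<forall>n\<ge>N. norm (measure M (symdiff (P n) B)) \<le> (1 + measure M B) * (1/4) ^ n"
      using bound by (simp add: power_one_over)
  qed
  then have "null_set V v {x\<in>X. \<not> (\<lambda>n. indicator (P n) x :: real) \<longlonglongrightarrow> indicator B x}"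
    using P(1) R_sets B by (intro indicators_converge_ae) auto
  then have "null_set V v ({x\<in>X. \<not> (\<lambda>n. indicator (P n) x :: real) \<longlonglongrightarrow> indicator B x} \<union> D)"
    using D by (rule null_set_Un)
  moreover have "{x\<in>X. \<not> (\<lambda>n. indicator (P n) x :: real) \<longlonglongrightarrow> indicator A x} \<subseteq>
      {x\<in>X. \<not> (\<lambda>n. indicator (P n) x :: real) \<longlonglongrightarrow> indicator B x} \<union> D"
    using A(1) by (auto simp: symdiff_def indicator_def)
  moreover have "basic_seq V v (\<lambda>n. indicator (P n) :: 'a \<Rightarrow> real)"
    using basic_seq_indicators[OF P B bound] .
  ultimately show ?thesis
    unfolding V_c_def L_space_def using A(2) null_set_subset by blast
qed

end

section \<open>Members of \<open>V\<^sub>c\<close> are \<open>S\<^sup>\<delta>\<^sup>\<sigma>\<close>-sets modulo null sets\<close>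

context finite_prering_measure
begin

text \<open>Functions taking finitely many values on \<open>X\<close>, each on a member of \<open>R\<close>; this class contains
  the simple functions and is closed under sums, so it contains every basic sequence.\<close>

definition R_step :: "('a \<Rightarrow> real) \<Rightarrow> bool" where
  "R_step q \<longleftrightarrow> finite (q ` X) \<and> (\<forall>t. {x\<in>X. q x = t} \<in> R)"

lemma X_in_R: "X \<in> R"
  using X_in_V by (rule V_in_R)

lemma R_step_const: "R_step (\<lambda>x. c)"
proof -
  have "{x\<in>X. c = t} \<in> R" for t
    by (cases "c = t") (simp_all add: X_in_R S_of_empty)
  moreover have "finite ((\<lambda>x. c) ` X)" by (rule finite_subset[of _ "{c}"]) auto
  ultimately show ?thesis unfolding R_step_def by blast
qed

lemma R_step_indicator:
  assumes "A \<in> V"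
  shows "R_step (indicator A)"
proof -
  have A_sub: "A \<subseteq> X" using assms V_Pow by auto
  have "{x\<in>X. indicator A x = t} \<in> R" for t
  proof -
    have "{x\<in>X. indicator A x = t} = (if t = 1 then A else {}) \<union> (if t = 0 then X - A else {})"
      using A_sub by (auto simp: indicator_def)
    moreover have "A \<in> R" "X - A \<in> R" using assms X_in_R V_in_R S_of_Diff[OF prering] by auto
    ultimately show ?thesis using S_of_Un[OF prering] S_of_empty by (auto simp del: Un_iff)
  qed
  moreover have "finite (indicator A ` X :: real set)"
    by (rule finite_subset[of _ "{0, 1}"]) (auto simp: indicator_def)
  ultimately show ?thesis unfolding R_step_def by blast
qed

lemma R_step_combine:
  assumes q1: "R_step q1" and q2: "R_step q2"
  shows "R_step (\<lambda>x. \<phi> (q1 x) (q2 x))"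
proof -
  let ?P = "q1 ` X \<times> q2 ` X"
  have fin: "finite ?P" using q1 q2 by (auto simp: R_step_def)
  have "(\<lambda>x. \<phi> (q1 x) (q2 x)) ` X \<subseteq> (\<lambda>p. \<phi> (fst p) (snd p)) ` ?P" by force
  then have "finite ((\<lambda>x. \<phi> (q1 x) (q2 x)) ` X)" using fin by (rule finite_subset[OF _ finite_imageI])
  moreover have "{x\<in>X. \<phi> (q1 x) (q2 x) = t} \<in> R" for t
  proof -
    let ?Q = "{p\<in>?P. \<phi> (fst p) (snd p) = t}"
    have "{x\<in>X. \<phi> (q1 x) (q2 x) = t} = (\<Union>p\<in>?Q. {x\<in>X. q1 x = fst p} \<inter> {x\<in>X. q2 x = snd p})"
      by fastforce
    also have "\<dots> \<in> R"
      using fin q1 q2 unfolding R_step_def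
      by (intro R_ring.finite_UN R_ring.Int) auto
    finally show ?thesis .
  qed
  ultimately show ?thesis unfolding R_step_def by blast
qed

lemma R_step_sum: "finite I \<Longrightarrow> (\<And>i. i \<in> I \<Longrightarrow> R_step (q i)) \<Longrightarrow> R_step (\<lambda>x. \<Sum>i\<in>I. q i x)"
proof (induction I rule: finite_induct)
  case empty
  then show ?case using R_step_const[of 0] by simp
next
  case (insert i I)
  then show ?case using R_step_combine[of "q i" "\<lambda>x. \<Sum>i\<in>I. q i x" "(+)"] by simp
qed

lemma R_step_simple_fun:
  assumes "simple_fun V h"
  shows "R_step h"
proof -
  obtain n r A where "simple_rep V h n r A" using assms by (auto simp: simple_fun_def)
  then have A_V: "\<And>i. i < n \<Longrightarrow> A i \<in> V" and h: "h = (\<lambda>x. \<Sum>i<n. r i * indicator (A i) x)"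
    by (auto simp: simple_rep_def)
  have "R_step (\<lambda>x. r i * indicator (A i) x)" if "i < n" for i
    using R_step_combine[OF R_step_const R_step_indicator[OF A_V[OF that]], of "(*)" "r i"] by simp
  then show ?thesis unfolding h by (intro R_step_sum) auto
qed

lemma R_step_superlevel:
  assumes "R_step q"
  shows "{x\<in>X. c < q x} \<in> R"
proof -
  have "{x\<in>X. c < q x} = (\<Union>t\<in>{t\<in>q ` X. c < t}. {x\<in>X. q x = t})" by auto
  also have "\<dots> \<in> R"
    using assms unfolding R_step_def by (intro R_ring.finite_UN) auto
  finally show ?thesis .
qed

text \<open>Implication (a) \<open>\<Longrightarrow>\<close> (b): if \<open>s\<^sub>n \<rightarrow> 1\<^sub>A\<close> outside a null set, then \<open>A\<close> differs by a null set
  from \<open>lim inf\<^sub>n {s\<^sub>n > 1/2}\<close>, which is a countable union of countable intersections of ring sets.\<close>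

lemma Vc_imp_sigma_delta_S:
  assumes "A \<in> V_c X V v"
  shows "\<exists>B D. B \<in> sigma_of (delta_of R) \<and> null_set V v D \<and> A = symdiff B D"
proof -
  from assms obtain s where A_sub: "A \<subseteq> X" and bs: "basic_seq V v s"
    and null: "null_set V v {x\<in>X. \<not> (\<lambda>n. s n x) \<longlonglongrightarrow> indicator A x}"
    unfolding V_c_def L_space_def by blast
  from bs obtain h where h: "\<And>n. n \<ge> 1 \<Longrightarrow> simple_fun V (h n)"
    and s: "\<And>n. s n = (\<lambda>x. \<Sum>k\<in>{1..n}. h k x)"
    unfolding basic_seq_def by blast
  have "R_step (s n)" for n unfolding s using h by (intro R_step_sum R_step_simple_fun) auto
  then have "{x\<in>X. 1/2 < s n x} \<in> R" for n by (rule R_step_superlevel)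
  then have "(\<Union>m. \<Inter>n. {x\<in>X. 1/2 < s (n + m) x}) \<in> sigma_of (delta_of R)"
    unfolding sigma_of_def delta_of_def by blast
  moreover have "null_set V v (symdiff A (\<Union>m. \<Inter>n. {x\<in>X. 1/2 < s (n + m) x}))"
    using null symdiff_liminf_superlevel_subset[OF A_sub] by (rule null_set_subset)
  moreover have "A = symdiff (\<Union>m. \<Inter>n. {x\<in>X. 1/2 < s (n + m) x})
      (symdiff A (\<Union>m. \<Inter>n. {x\<in>X. 1/2 < s (n + m) x}))"
    by (auto simp: symdiff_def)
  ultimately show ?thesis by blast
qed

end

theorem mainTheorem10:
  fixes X :: "'a set" and V :: "'a set set" and v :: "'a set \<Rightarrow> real" and A :: "'a set"
  assumes "measure_space_pr X V v" and "X \<in> V" and "A \<subseteq> X"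
  shows "(A \<in> V_c X V v \<longleftrightarrow>
           (\<exists>B D. B \<in> sigma_of (delta_of (S_of V)) \<and> null_set V v D \<and> A = symdiff B D))
       \<and> (A \<in> V_c X V v \<longleftrightarrow>
           (\<exists>B D. B \<in> delta_of (sigma_of V) \<and> null_set V v D \<and> A = symdiff B D))"
proof -
  interpret finite_prering_measure X V v
    using assms(1,2) by unfold_locales
  have sigma_delta_S: "sigma_of (delta_of (S_of V)) \<subseteq> sets M"
    using R_sets by (intro sigma_of_subset_sets delta_of_subset_sets) blast
  have delta_sigma_V: "delta_of (sigma_of V) \<subseteq> sets M"
    using V_sets by (intro delta_of_subset_sets sigma_of_subset_sets) blast
  have measurable_in_Vc: "A \<in> V_c X V v" if "B \<in> sets M" "null_set V v D" "A = symdiff B D" for B D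
    using measurable_symdiff_null_in_Vc[OF that assms(3)] .
  have a_b: "\<exists>B D. B \<in> sigma_of (delta_of (S_of V)) \<and> null_set V v D \<and> A = symdiff B D"
    if "A \<in> V_c X V v"
    using Vc_imp_sigma_delta_S[OF that] .
  have a_c: "\<exists>B D. B \<in> delta_of (sigma_of V) \<and> null_set V v D \<and> A = symdiff B D"
    if "A \<in> V_c X V v"
    using a_b[OF that] sigma_delta_S measurable_symdiff_null_delta_sigma_V by blast
  show ?thesis
    using a_b a_c measurable_in_Vc sigma_delta_S delta_sigma_V by blast
qed

end
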